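(* Let $G$ and $H$ be graphs each having at least one edge. Then the lexicographic product $G\circ H$ is well-bicovered if and only if (i) $G$ is well-covered; and (ii) $H$ is both well-covered and well-bicovered, and $b(H)=2\alpha(H)$.
   Context: All graphs are finite and simple; "subgraph" means induced subgraph. $b(G)$ denotes the maximum order of an induced bipartite subgraph of $G$. A graph is well-bicovered if every vertex-inclusion-maximal induced bipartite subgraph has the same order. A graph is well-covered if every maximal independent set has the same cardinality, the independence number $\alpha$. The lexicographic product $G\circ H$ has vertex set $V(G)\times V(H)$, with $(u,v)$ adjacent to $(x,y)$ iff $ux\in E(G)$, or $u=x$ and $vy\in E(H)$. *)

theory Defs
  imports Main
begin

text \<open>A finite simple graph: finite vertex set V, symmetric irreflexive adjacency E
  whose edges lie inside V. Subgraphs are induced subgraphs, given by vertex subsets.\<close>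

definition graph :: "'a set \<Rightarrow> ('a \<Rightarrow> 'a \<Rightarrow> bool) \<Rightarrow> bool" where
  "graph V E \<longleftrightarrow> finite V \<and> (\<forall>x y. E x y \<longrightarrow> E y x) \<and> (\<forall>x. \<not> E x x)
     \<and> (\<forall>x y. E x y \<longrightarrow> x \<in> V \<and> y \<in> V)"

definition has_edge :: "'a set \<Rightarrow> ('a \<Rightarrow> 'a \<Rightarrow> bool) \<Rightarrow> bool" where
  "has_edge V E \<longleftrightarrow> (\<exists>x\<in>V. \<exists>y\<in>V. E x y)"

definition independent :: "'a set \<Rightarrow> ('a \<Rightarrow> 'a \<Rightarrow> bool) \<Rightarrow> 'a set \<Rightarrow> bool" where
  "independent V E S \<longleftrightarrow> S \<subseteq> V \<and> (\<forall>x\<in>S. \<forall>y\<in>S. \<not> E x y)"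

definition maximal_independent :: "'a set \<Rightarrow> ('a \<Rightarrow> 'a \<Rightarrow> bool) \<Rightarrow> 'a set \<Rightarrow> bool" where
  "maximal_independent V E S \<longleftrightarrow> independent V E S \<and>
     (\<forall>T. independent V E T \<and> S \<subseteq> T \<longrightarrow> T = S)"

definition well_covered :: "'a set \<Rightarrow> ('a \<Rightarrow> 'a \<Rightarrow> bool) \<Rightarrow> bool" where
  "well_covered V E \<longleftrightarrow> (\<forall>S T. maximal_independent V E S \<and> maximal_independent V E T
     \<longrightarrow> card S = card T)"

definition alpha :: "'a set \<Rightarrow> ('a \<Rightarrow> 'a \<Rightarrow> bool) \<Rightarrow> nat" where
  "alpha V E = Max (card ` {S. independent V E S})"

definition bipartite_set :: "'a set \<Rightarrow> ('a \<Rightarrow> 'a \<Rightarrow> bool) \<Rightarrow> 'a set \<Rightarrow> bool" where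
  "bipartite_set V E S \<longleftrightarrow> S \<subseteq> V \<and>
     (\<exists>A B. A \<union> B = S \<and> A \<inter> B = {} \<and> independent V E A \<and> independent V E B)"

definition maximal_bipartite_set :: "'a set \<Rightarrow> ('a \<Rightarrow> 'a \<Rightarrow> bool) \<Rightarrow> 'a set \<Rightarrow> bool" where
  "maximal_bipartite_set V E S \<longleftrightarrow> bipartite_set V E S \<and>
     (\<forall>T. bipartite_set V E T \<and> S \<subseteq> T \<longrightarrow> T = S)"

definition well_bicovered :: "'a set \<Rightarrow> ('a \<Rightarrow> 'a \<Rightarrow> bool) \<Rightarrow> bool" where
  "well_bicovered V E \<longleftrightarrow> (\<forall>S T. maximal_bipartite_set V E S \<and> maximal_bipartite_set V E T
     \<longrightarrow> card S = card T)"

definition bip_number :: "'a set \<Rightarrow> ('a \<Rightarrow> 'a \<Rightarrow> bool) \<Rightarrow> nat" where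
  "bip_number V E = Max (card ` {S. bipartite_set V E S})"

definition lex_vertices :: "'a set \<Rightarrow> 'b set \<Rightarrow> ('a \<times> 'b) set" where
  "lex_vertices V W = V \<times> W"

definition lex_edge :: "('a \<Rightarrow> 'a \<Rightarrow> bool) \<Rightarrow> ('b \<Rightarrow> 'b \<Rightarrow> bool) \<Rightarrow>
    ('a \<times> 'b) \<Rightarrow> ('a \<times> 'b) \<Rightarrow> bool" where
  "lex_edge E F p q \<longleftrightarrow> E (fst p) (fst q) \<or> (fst p = fst q \<and> F (snd p) (snd q))"

end

theory Submission
  imports Defs
begin

(* A vertex set S of G \<circ> H induces a bipartite subgraph iff its projection U to G does, every
   fibre of S does in H, and the fibre over each vertex with a neighbour in U is independent
   in H.  If S is maximal, the fibres over the set I of vertices isolated in G[U] are maximal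
   bipartite in H, the other fibres are maximal independent in H, and for every bipartition
   U = P \<union> Q both P \<union> I and Q \<union> I are maximal independent in G.  So when G and H are
   well-covered and H is well-bicovered, |S| = |I| b(H) + |U - I| \<alpha>(H) with
   |U - I| + 2|I| = 2\<alpha>(G), and this is 2\<alpha>(G)\<alpha>(H) for every S once b(H) = 2\<alpha>(H).
   Conversely, A \<times> T is maximal bipartite for A maximal independent in G and T maximal
   bipartite in H, which gives (i) and the well-bicoveredness of H; exchanging the fibre over a
   non-isolated vertex for any maximal independent set of H shows that H is well-covered; and
   comparing the two counts of |S| for such an S with |A \<times> T| forces b(H) = 2\<alpha>(H). *)

section \<open>Maximal sets in finite graphs\<close>

definition maximal_wrt :: "('a set \<Rightarrow> bool) \<Rightarrow> 'a set \<Rightarrow> bool" where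
  "maximal_wrt P M \<longleftrightarrow> P M \<and> (\<forall>T. P T \<and> M \<subseteq> T \<longrightarrow> T = M)"

lemma maximal_independent_eq: "maximal_independent V E = maximal_wrt (independent V E)"
  by (simp add: fun_eq_iff maximal_independent_def maximal_wrt_def)

lemma maximal_bipartite_set_eq: "maximal_bipartite_set V E = maximal_wrt (bipartite_set V E)"
  by (simp add: fun_eq_iff maximal_bipartite_set_def maximal_wrt_def)

lemma finite_Collect_subsets:
  assumes "finite V" "\<And>X. P X \<Longrightarrow> X \<subseteq> V"
  shows "finite {X. P X}"
proof (rule finite_subset)
  show "{X. P X} \<subseteq> Pow V" using assms(2) by blast
qed (use assms(1) in simp)

lemma ex_maximal_wrt_superset:
  assumes "finite V" "\<And>X. P X \<Longrightarrow> X \<subseteq> V" "P S"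
  shows "\<exists>M. S \<subseteq> M \<and> maximal_wrt P M"
proof -
  obtain M where "P M" "S \<subseteq> M" "\<forall>T\<in>{X. P X}. M \<subseteq> T \<longrightarrow> M = T"
    using finite_has_maximal2[of "{X. P X}" S] finite_Collect_subsets[OF assms(1,2)] assms(3) by auto
  then show ?thesis unfolding maximal_wrt_def by auto
qed

lemma ex_maximal_wrt_card_Max:
  assumes "finite V" "\<And>X. P X \<Longrightarrow> X \<subseteq> V" "P {}"
  shows "\<exists>M. maximal_wrt P M \<and> card M = Max (card ` {X. P X})"
proof -
  have fin: "finite {X. P X}" using finite_Collect_subsets[OF assms(1,2)] .
  obtain M where M: "P M" "card M = Max (card ` {X. P X})"
    using Max_in[of "card ` {X. P X}"] fin assms(3) by fastforce
  have "T = M" if "P T" "M \<subseteq> T" for T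
  proof (rule card_seteq[symmetric])
    show "finite T" using assms(1,2) that(1) finite_subset by blast
    show "card T \<le> card M" using M(2) fin that(1) by simp
  qed fact
  then show ?thesis using M unfolding maximal_wrt_def by blast
qed

lemma card_maximal_wrt_eq_Max:
  assumes "finite V" "\<And>X. P X \<Longrightarrow> X \<subseteq> V" "P {}"
    and "\<And>S T. maximal_wrt P S \<Longrightarrow> maximal_wrt P T \<Longrightarrow> card S = card T"
    and "maximal_wrt P S"
  shows "card S = Max (card ` {X. P X})"
  using ex_maximal_wrt_card_Max[of V P] assms by metis

lemma graph_finite: "graph V E \<Longrightarrow> finite V"
  unfolding graph_def by simp

lemma graph_sym: "graph V E \<Longrightarrow> E x y \<Longrightarrow> E y x"
  unfolding graph_def by blast

lemma graph_irrefl: "graph V E \<Longrightarrow> \<not> E x x"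
  unfolding graph_def by blast

lemma has_edgeE:
  assumes "has_edge V E"
  obtains x y where "x \<in> V" "y \<in> V" "E x y"
  using assms unfolding has_edge_def by blast

lemma independent_subset: "independent V E A \<Longrightarrow> B \<subseteq> A \<Longrightarrow> independent V E B"
  unfolding independent_def by blast

lemma independent_empty [simp]: "independent V E {}"
  unfolding independent_def by simp

lemma independent_singleton: "graph V E \<Longrightarrow> v \<in> V \<Longrightarrow> independent V E {v}"
  unfolding independent_def using graph_irrefl by fastforce

lemma finite_independent: "graph V E \<Longrightarrow> independent V E A \<Longrightarrow> finite A"
  unfolding independent_def using graph_finite finite_subset by blast

lemma bipartite_set_iff:
  "bipartite_set V E S \<longleftrightarrow> (\<exists>A B. S \<subseteq> A \<union> B \<and> independent V E A \<and> independent V E B)"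
proof
  assume "\<exists>A B. S \<subseteq> A \<union> B \<and> independent V E A \<and> independent V E B"
  then obtain A B where AB: "S \<subseteq> A \<union> B" "independent V E A" "independent V E B" by blast
  show "bipartite_set V E S" unfolding bipartite_set_def
  proof (intro conjI exI)
    show "S \<subseteq> V" using AB unfolding independent_def by blast
    show "independent V E (A \<inter> S)" "independent V E (S - A)"
      using AB independent_subset by blast+
  qed (use AB in blast)+
qed (auto simp: bipartite_set_def)

lemma bipartite_set_subset: "bipartite_set V E S \<Longrightarrow> S \<subseteq> V"
  unfolding bipartite_set_def by simp

lemma bipartite_set_if_independent: "independent V E S \<Longrightarrow> bipartite_set V E S"
  unfolding bipartite_set_iff by blast

lemma bipartite_set_no_triangle:
  assumes "bipartite_set V E S" "p \<in> S" "q \<in> S" "r \<in> S" "E p q" "E q r" "E p r"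
  shows False
proof -
  obtain A B where AB: "S \<subseteq> A \<union> B" "independent V E A" "independent V E B"
    using assms(1) unfolding bipartite_set_iff by blast
  have A: "\<not> E a b" if "a \<in> A" "b \<in> A" for a b using AB(2) that unfolding independent_def by blast
  have B: "\<not> E a b" if "a \<in> B" "b \<in> B" for a b using AB(3) that unfolding independent_def by blast
  have "p \<in> A \<or> p \<in> B" "q \<in> A \<or> q \<in> B" "r \<in> A \<or> r \<in> B" using AB(1) assms(2-4) by blast+
  then show False using A B assms(5-7) by metis
qed

lemma well_covered_card:
  assumes "graph V E" "well_covered V E" "maximal_independent V E S"
  shows "card S = alpha V E"
  unfolding alpha_def
proof (rule card_maximal_wrt_eq_Max)
  show "finite V" using assms(1) by (rule graph_finite)
  show "X \<subseteq> V" if "independent V E X" for X using that unfolding independent_def by simp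
  show "maximal_wrt (independent V E) S" using assms(3) unfolding maximal_independent_eq .
  show "card A = card B" if "maximal_wrt (independent V E) A" "maximal_wrt (independent V E) B" for A B
    using assms(2) that unfolding well_covered_def maximal_independent_eq by blast
qed simp

lemma well_bicovered_card:
  assumes "graph V E" "well_bicovered V E" "maximal_bipartite_set V E S"
  shows "card S = bip_number V E"
  unfolding bip_number_def
proof (rule card_maximal_wrt_eq_Max)
  show "finite V" using assms(1) by (rule graph_finite)
  show "X \<subseteq> V" if "bipartite_set V E X" for X using that by (rule bipartite_set_subset)
  show "bipartite_set V E {}" by (simp add: bipartite_set_if_independent)
  show "maximal_wrt (bipartite_set V E) S" using assms(3) unfolding maximal_bipartite_set_eq .
  show "card A = card B" if "maximal_wrt (bipartite_set V E) A" "maximal_wrt (bipartite_set V E) B" for A B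
    using assms(2) that unfolding well_bicovered_def maximal_bipartite_set_eq by blast
qed

lemma ex_maximal_independent:
  assumes "finite V"
  obtains A where "maximal_independent V E A"
  using ex_maximal_wrt_superset[of V "independent V E" "{}"] assms
  unfolding maximal_independent_eq independent_def by blast

lemma ex_maximal_bipartite_set_superset:
  assumes "finite V" "bipartite_set V E S"
  obtains M where "S \<subseteq> M" "maximal_bipartite_set V E M"
  using ex_maximal_wrt_superset[of V "bipartite_set V E" S] assms bipartite_set_subset
  unfolding maximal_bipartite_set_eq by blast

lemma maximal_independent_nonempty:
  assumes "graph V E" "V \<noteq> {}" "maximal_independent V E A"
  shows "A \<noteq> {}"
proof
  assume A: "A = {}"
  obtain v where "v \<in> V" using assms(2) by blast
  then have "independent V E {v}" by (rule independent_singleton[OF assms(1)])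
  then have "{v} = A" using assms(3) A unfolding maximal_independent_def by blast
  then show False using A by blast
qed

lemma maximal_independent_dominating:
  assumes G: "graph V E" and A: "maximal_independent V E A" and z: "z \<in> V" "z \<notin> A"
  shows "\<exists>a\<in>A. E a z"
proof (rule ccontr)
  assume no: "\<not> (\<exists>a\<in>A. E a z)"
  have A_indep: "independent V E A" using A unfolding maximal_independent_def by blast
  have "independent V E (insert z A)" unfolding independent_def
  proof (intro conjI ballI)
    show "insert z A \<subseteq> V" using A_indep z(1) unfolding independent_def by blast
    fix a b assume "a \<in> insert z A" "b \<in> insert z A"
    then show "\<not> E a b"
      using no A_indep graph_sym[OF G, of z] graph_irrefl[OF G, of z] unfolding independent_def by blast
  qed
  then show False using A z(2) unfolding maximal_independent_def by blast
qed

lemma maximal_bipartite_set_has_edge: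
  assumes G: "graph V E" and "has_edge V E" and T: "maximal_bipartite_set V E T"
  shows "\<exists>a\<in>T. \<exists>b\<in>T. E a b"
proof (rule ccontr)
  assume no_edge: "\<not> (\<exists>a\<in>T. \<exists>b\<in>T. E a b)"
  have "T \<subseteq> V" using T bipartite_set_subset unfolding maximal_bipartite_set_def by blast
  then have T_indep: "independent V E T" using no_edge unfolding independent_def by blast
  have "insert v T = T" if "v \<in> V" for v
  proof -
    have "bipartite_set V E (insert v T)"
      using T_indep independent_singleton[OF G that] unfolding bipartite_set_iff
      by (intro exI[of _ T] exI[of _ "{v}"]) auto
    then show ?thesis using T unfolding maximal_bipartite_set_def by blast
  qed
  then have "V \<subseteq> T" by blast
  then show False using no_edge \<open>has_edge V E\<close> unfolding has_edge_def by blast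
qed

section \<open>Bipartite sets in the lexicographic product\<close>

definition fiber :: "('a \<times> 'b) set \<Rightarrow> 'a \<Rightarrow> 'b set" where
  "fiber S u = {v. (u, v) \<in> S}"

definition isolated :: "('a \<Rightarrow> 'a \<Rightarrow> bool) \<Rightarrow> 'a set \<Rightarrow> 'a set" where
  "isolated E U = {u \<in> U. \<forall>x\<in>U. \<not> E u x}"

definition refiber :: "('a \<times> 'b) set \<Rightarrow> 'a \<Rightarrow> 'b set \<Rightarrow> ('a \<times> 'b) set" where
  "refiber S u T = {p \<in> S. fst p \<noteq> u} \<union> {u} \<times> T"

lemma Sigma_fst_fiber: "Sigma (fst ` S) (fiber S) = S"
  unfolding fiber_def by force

lemma fiber_nonempty: "u \<in> fst ` S \<Longrightarrow> fiber S u \<noteq> {}"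
  unfolding fiber_def by force

lemma fiber_subset: "S \<subseteq> V \<times> W \<Longrightarrow> fiber S u \<subseteq> W"
  unfolding fiber_def by blast

lemma fiber_mono: "A \<subseteq> B \<Longrightarrow> fiber A u \<subseteq> fiber B u"
  unfolding fiber_def by blast

lemma fiber_insert: "fiber (insert (x, w) S) u = (if u = x then insert w (fiber S u) else fiber S u)"
  unfolding fiber_def by auto

lemma fiber_refiber [simp]: "fiber (refiber S u T) x = (if x = u then T else fiber S x)"
  unfolding fiber_def refiber_def by auto

lemma fst_refiber: "u \<in> fst ` S \<Longrightarrow> T \<noteq> {} \<Longrightarrow> fst ` refiber S u T = fst ` S"
  unfolding refiber_def by (auto simp: image_Un)

lemma refiber_fiber [simp]: "refiber S u (fiber S u) = S"
  unfolding refiber_def fiber_def by auto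

lemma refiber_refiber [simp]: "refiber (refiber S u A) u B = refiber S u B"
  unfolding refiber_def by auto

lemma subset_refiber: "fiber S u \<subseteq> T \<Longrightarrow> S \<subseteq> refiber S u T"
  unfolding refiber_def fiber_def by auto

lemma card_refiber:
  assumes "finite S" "finite T"
  shows "card (refiber S u T) = card {p \<in> S. fst p \<noteq> u} + card T"
  unfolding refiber_def using assms
  by (subst card_Un_disjoint) (auto simp: card_cartesian_product)

lemma isolated_subset: "isolated E U \<subseteq> U"
  unfolding isolated_def by blast

lemma independent_Un_isolated:
  assumes G: "graph V E" and "U \<subseteq> V" "P \<subseteq> U" "independent V E P"
  shows "independent V E (P \<union> isolated E U)"
  unfolding independent_def
proof (intro conjI ballI notI)
  show "P \<union> isolated E U \<subseteq> V"
    using assms(2,3) isolated_subset[of E U] by blast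
  fix x y assume x: "x \<in> P \<union> isolated E U" and y: "y \<in> P \<union> isolated E U" and xy: "E x y"
  have U: "x \<in> U" "y \<in> U" using x y assms(3) isolated_subset[of E U] by blast+
  show False
  proof (cases "x \<in> isolated E U \<or> y \<in> isolated E U")
    case True
    then show False using xy graph_sym[OF G xy] U unfolding isolated_def by blast
  next
    case False
    then have "x \<in> P" "y \<in> P" using x y by blast+
    then show False using assms(4) xy unfolding independent_def by blast
  qed
qed

lemma independent_lex_Sigma:
  assumes "independent V E K" "\<And>u. u \<in> K \<Longrightarrow> independent W F (g u)"
  shows "independent (V \<times> W) (lex_edge E F) (Sigma K g)"
  using assms unfolding independent_def lex_edge_def by auto

lemma independent_lex_projection:
  "independent (V \<times> W) (lex_edge E F) A \<Longrightarrow> independent V E (fst ` A)"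
  unfolding independent_def lex_edge_def by fastforce

lemma independent_lex_fiber:
  "independent (V \<times> W) (lex_edge E F) A \<Longrightarrow> independent W F (fiber A u)"
  unfolding independent_def lex_edge_def fiber_def by fastforce

lemma bipartite_lex_projection:
  assumes "bipartite_set (V \<times> W) (lex_edge E F) S"
  shows "bipartite_set V E (fst ` S)"
proof -
  obtain A B where "S \<subseteq> A \<union> B" "independent (V \<times> W) (lex_edge E F) A"
      "independent (V \<times> W) (lex_edge E F) B"
    using assms unfolding bipartite_set_iff by blast
  then show ?thesis unfolding bipartite_set_iff
    by (intro exI[of _ "fst ` A"] exI[of _ "fst ` B"]) (auto intro: independent_lex_projection)
qed

lemma bipartite_lex_fiber:
  assumes "bipartite_set (V \<times> W) (lex_edge E F) S"
  shows "bipartite_set W F (fiber S u)"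
proof -
  obtain A B where "S \<subseteq> A \<union> B" "independent (V \<times> W) (lex_edge E F) A"
      "independent (V \<times> W) (lex_edge E F) B"
    using assms unfolding bipartite_set_iff by blast
  moreover from \<open>S \<subseteq> A \<union> B\<close> have "fiber S u \<subseteq> fiber A u \<union> fiber B u"
    unfolding fiber_def by blast
  ultimately show ?thesis unfolding bipartite_set_iff by (blast intro: independent_lex_fiber)
qed

lemma bipartite_lex_fiber_independent:
  assumes S: "bipartite_set (V \<times> W) (lex_edge E F) S"
    and u: "u \<in> fst ` S" "u \<notin> isolated E (fst ` S)"
  shows "independent W F (fiber S u)"
  unfolding independent_def
proof (intro conjI ballI notI)
  show "fiber S u \<subseteq> W" using bipartite_set_subset[OF S] by (rule fiber_subset)
  obtain x w where "(x, w) \<in> S" "E u x" using u unfolding isolated_def by force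
  moreover fix a b assume "a \<in> fiber S u" "b \<in> fiber S u" "F a b"
  ultimately show False
    using bipartite_set_no_triangle[OF S, of "(u, a)" "(u, b)" "(x, w)"]
    unfolding fiber_def lex_edge_def by simp
qed

lemma bipartite_lexI:
  assumes G: "graph V E" and SV: "S \<subseteq> V \<times> W"
    and proj: "bipartite_set V E (fst ` S)"
    and fib: "\<And>u. u \<in> fst ` S \<Longrightarrow> bipartite_set W F (fiber S u)"
    and fib_indep: "\<And>u. u \<in> fst ` S \<Longrightarrow> u \<notin> isolated E (fst ` S) \<Longrightarrow> independent W F (fiber S u)"
  shows "bipartite_set (V \<times> W) (lex_edge E F) S"
proof -
  let ?U = "fst ` S"
  let ?I = "isolated E ?U"
  have IU: "?I \<subseteq> ?U" by (rule isolated_subset)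
  obtain P Q where PQ: "P \<union> Q = ?U" "independent V E P" "independent V E Q"
    using proj unfolding bipartite_set_def by blast
  have "\<forall>u\<in>?I. \<exists>X Y. fiber S u \<subseteq> X \<union> Y \<and> independent W F X \<and> independent W F Y"
  proof
    fix u assume "u \<in> ?I"
    then have "bipartite_set W F (fiber S u)" using IU fib by blast
    then show "\<exists>X Y. fiber S u \<subseteq> X \<union> Y \<and> independent W F X \<and> independent W F Y"
      unfolding bipartite_set_iff .
  qed
  then obtain X Y where XY: "\<And>u. u \<in> ?I \<Longrightarrow>
      fiber S u \<subseteq> X u \<union> Y u \<and> independent W F (X u) \<and> independent W F (Y u)"
    by metis
  define gA where "gA u = (if u \<in> ?I then X u else fiber S u)" for u
  define gB where "gB u = (if u \<in> ?I then Y u else fiber S u)" for u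
  have UV: "?U \<subseteq> V" using SV by auto
  have g_indep: "independent W F (gA u)" "independent W F (gB u)" if "u \<in> ?U" for u
    using that XY[of u] fib_indep[of u] unfolding gA_def gB_def by auto
  have "S \<subseteq> Sigma (P \<union> ?I) gA \<union> Sigma (Q \<union> ?I) gB"
  proof
    fix p assume "p \<in> S"
    then obtain u v where p: "p = (u, v)" "u \<in> ?U" "v \<in> fiber S u"
      unfolding fiber_def by (cases p) (force simp: image_iff)
    then show "p \<in> Sigma (P \<union> ?I) gA \<union> Sigma (Q \<union> ?I) gB"
      using PQ(1) XY[of u] unfolding gA_def gB_def by (cases "u \<in> ?I") auto
  qed
  moreover have "independent (V \<times> W) (lex_edge E F) (Sigma (P \<union> ?I) gA)"
    using independent_Un_isolated[OF G UV _ PQ(2)] PQ(1) IU g_indep(1)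
    by (intro independent_lex_Sigma) blast+
  moreover have "independent (V \<times> W) (lex_edge E F) (Sigma (Q \<union> ?I) gB)"
    using independent_Un_isolated[OF G UV _ PQ(3)] PQ(1) IU g_indep(2)
    by (intro independent_lex_Sigma) blast+
  ultimately show ?thesis unfolding bipartite_set_iff by blast
qed

section \<open>Maximal bipartite sets in the lexicographic product\<close>

lemma bipartite_lex_refiber:
  assumes G: "graph V E" and S: "bipartite_set (V \<times> W) (lex_edge E F) S"
    and u: "u \<in> fst ` S" and T: "T \<noteq> {}" "bipartite_set W F T"
    and T_indep: "u \<notin> isolated E (fst ` S) \<Longrightarrow> independent W F T"
  shows "bipartite_set (V \<times> W) (lex_edge E F) (refiber S u T)"
proof (rule bipartite_lexI[OF G])
  show "refiber S u T \<subseteq> V \<times> W"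
    using u bipartite_set_subset[OF S] bipartite_set_subset[OF T(2)] unfolding refiber_def by auto
  show "bipartite_set V E (fst ` refiber S u T)"
    unfolding fst_refiber[OF u T(1)] using S by (rule bipartite_lex_projection)
  show "bipartite_set W F (fiber (refiber S u T) x)" for x
    using T(2) bipartite_lex_fiber[OF S] by simp
  show "independent W F (fiber (refiber S u T) x)"
    if "x \<in> fst ` refiber S u T" "x \<notin> isolated E (fst ` refiber S u T)" for x
    using that T_indep bipartite_lex_fiber_independent[OF S] unfolding fst_refiber[OF u T(1)] by auto
qed

lemma maximal_bipartite_lex_fiber_unique:
  assumes G: "graph V E" and S: "maximal_bipartite_set (V \<times> W) (lex_edge E F) S"
    and u: "u \<in> fst ` S" and T: "bipartite_set W F T" "fiber S u \<subseteq> T"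
    and T_indep: "u \<notin> isolated E (fst ` S) \<Longrightarrow> independent W F T"
  shows "T = fiber S u"
proof -
  have "T \<noteq> {}" using fiber_nonempty[OF u] T(2) by blast
  then have "bipartite_set (V \<times> W) (lex_edge E F) (refiber S u T)"
    using bipartite_lex_refiber[OF G _ u _ T(1) T_indep] S unfolding maximal_bipartite_set_def by blast
  then have "refiber S u T = S"
    using S subset_refiber[OF T(2)] unfolding maximal_bipartite_set_def by blast
  then show ?thesis using fiber_refiber[of S u T u] by simp
qed

lemma maximal_bipartite_lex_fiber_isolated:
  assumes G: "graph V E" and S: "maximal_bipartite_set (V \<times> W) (lex_edge E F) S"
    and u: "u \<in> isolated E (fst ` S)"
  shows "maximal_bipartite_set W F (fiber S u)"
proof -
  have u': "u \<in> fst ` S" using u isolated_subset[of E "fst ` S"] by blast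
  have "bipartite_set W F (fiber S u)"
    using S bipartite_lex_fiber[of V W E F S u] unfolding maximal_bipartite_set_def by blast
  moreover have "T = fiber S u" if "bipartite_set W F T" "fiber S u \<subseteq> T" for T
    using maximal_bipartite_lex_fiber_unique[OF G S u' that] u by blast
  ultimately show ?thesis unfolding maximal_bipartite_set_def by blast
qed

lemma maximal_bipartite_lex_fiber_nonisolated:
  assumes G: "graph V E" and S: "maximal_bipartite_set (V \<times> W) (lex_edge E F) S"
    and u: "u \<in> fst ` S" "u \<notin> isolated E (fst ` S)"
  shows "maximal_independent W F (fiber S u)"
proof -
  have "independent W F (fiber S u)"
    using S bipartite_lex_fiber_independent[of V W E F S u] u unfolding maximal_bipartite_set_def
    by blast
  moreover have "T = fiber S u" if "independent W F T" "fiber S u \<subseteq> T" for T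
    using maximal_bipartite_lex_fiber_unique[OF G S u(1) bipartite_set_if_independent that(2)] that(1)
    by blast
  ultimately show ?thesis unfolding maximal_independent_def by blast
qed

lemma bipartite_lex_insert:
  assumes G: "graph V E" and H: "graph W F" and S: "bipartite_set (V \<times> W) (lex_edge E F) S"
    and PQ: "P \<union> Q = fst ` S" "independent V E (insert x P)" "independent V E Q"
    and x: "x \<notin> fst ` S" "\<forall>y\<in>isolated E (fst ` S). \<not> E y x" and w: "w \<in> W"
  shows "bipartite_set (V \<times> W) (lex_edge E F) (insert (x, w) S)"
proof (rule bipartite_lexI[OF G])
  let ?U = "fst ` S"
  have "x \<in> V" using PQ(2) unfolding independent_def by blast
  then show "insert (x, w) S \<subseteq> V \<times> W" using bipartite_set_subset[OF S] w by blast
  have fst_insert: "fst ` insert (x, w) S = insert x ?U" by simp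
  show "bipartite_set V E (fst ` insert (x, w) S)"
    unfolding fst_insert bipartite_set_iff using PQ by blast
  have "fiber S x = {}" using x(1) unfolding fiber_def by force
  then have fib: "fiber (insert (x, w) S) y = (if y = x then {w} else fiber S y)" for y
    by (simp add: fiber_insert)
  have w_indep: "independent W F {w}" using H w by (rule independent_singleton)
  show "bipartite_set W F (fiber (insert (x, w) S) y)" for y
    using fib bipartite_lex_fiber[OF S, of y] bipartite_set_if_independent[OF w_indep] by simp
  show "independent W F (fiber (insert (x, w) S) y)"
    if y: "y \<in> fst ` insert (x, w) S" "y \<notin> isolated E (fst ` insert (x, w) S)" for y
  proof (cases "y = x")
    case False
    then have "y \<in> ?U" using y(1) by simp
    moreover have "y \<notin> isolated E ?U"
      using y(2) x(2) False \<open>y \<in> ?U\<close> unfolding fst_insert isolated_def by blast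
    ultimately show ?thesis using fib False bipartite_lex_fiber_independent[OF S] by simp
  qed (use fib w_indep in simp)
qed

lemma maximal_independent_Un_isolated_projection:
  assumes G: "graph V E" and H: "graph W F" and w: "w \<in> W"
    and S: "maximal_bipartite_set (V \<times> W) (lex_edge E F) S"
    and PQ: "P \<union> Q = fst ` S" "independent V E P" "independent V E Q"
  shows "maximal_independent V E (P \<union> isolated E (fst ` S))"
proof -
  let ?U = "fst ` S"
  let ?I = "isolated E ?U"
  have Sb: "bipartite_set (V \<times> W) (lex_edge E F) S"
    using S unfolding maximal_bipartite_set_def by blast
  have UV: "?U \<subseteq> V" using bipartite_set_subset[OF Sb] by auto
  have "x \<in> P \<union> ?I" if T: "independent V E T" "P \<union> ?I \<subseteq> T" and xT: "x \<in> T" for T x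
  proof (rule ccontr)
    assume x: "x \<notin> P \<union> ?I"
    have T_no_edge: "\<not> E a b" if "a \<in> T" "b \<in> T" for a b
      using T(1) that unfolding independent_def by blast
    show False
    proof (cases "x \<in> ?U")
      case True
      then obtain z where z: "z \<in> ?U" "E x z" using x unfolding isolated_def by blast
      have "z \<notin> P" using T_no_edge[OF xT] T(2) z(2) by blast
      then have "x \<in> Q" "z \<in> Q" using x z(1) True PQ(1) by blast+
      then show False using PQ(3) z(2) unfolding independent_def by blast
    next
      case False
      have "independent V E (insert x P)"
        using independent_subset[OF T(1), of "insert x P"] T(2) xT by blast
      moreover have "\<forall>y\<in>?I. \<not> E y x" using T_no_edge[of _ x] T(2) xT by blast
      ultimately have "bipartite_set (V \<times> W) (lex_edge E F) (insert (x, w) S)"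
        using bipartite_lex_insert[OF G H Sb PQ(1) _ PQ(3) False _ w] by blast
      then have "insert (x, w) S = S" using S unfolding maximal_bipartite_set_def by blast
      then show False using False by force
    qed
  qed
  moreover have "independent V E (P \<union> ?I)"
    using independent_Un_isolated[OF G UV _ PQ(2)] PQ(1) by blast
  ultimately show ?thesis unfolding maximal_independent_def by blast
qed

lemma card_maximal_bipartite_lex:
  assumes G: "graph V E" and H: "graph W F"
    and S: "maximal_bipartite_set (V \<times> W) (lex_edge E F) S"
    and wcH: "well_covered W F" and wbcH: "well_bicovered W F"
  shows "card S = card (isolated E (fst ` S)) * bip_number W F
    + card (fst ` S - isolated E (fst ` S)) * alpha W F"
proof -
  let ?U = "fst ` S"
  let ?I = "isolated E ?U"
  have SV: "S \<subseteq> V \<times> W" using S bipartite_set_subset unfolding maximal_bipartite_set_def by blast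
  then have "?U \<subseteq> V" by auto
  then have fU: "finite ?U" using graph_finite[OF G] by (rule finite_subset)
  have ffib: "\<forall>u\<in>?U. finite (fiber S u)"
    using finite_subset[OF fiber_subset[OF SV] graph_finite[OF H]] by blast
  have "card S = (\<Sum>u\<in>?U. card (fiber S u))"
    using card_SigmaI[OF fU ffib] Sigma_fst_fiber[of S] by simp
  also have "\<dots> = (\<Sum>u\<in>?I. card (fiber S u)) + (\<Sum>u\<in>?U - ?I. card (fiber S u))"
    using sum.subset_diff[OF isolated_subset fU] by (simp add: add.commute)
  also have "(\<Sum>u\<in>?I. card (fiber S u)) = (\<Sum>u\<in>?I. bip_number W F)"
    using well_bicovered_card[OF H wbcH maximal_bipartite_lex_fiber_isolated[OF G S]]
    by (rule sum.cong[OF refl])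
  also have "(\<Sum>u\<in>?U - ?I. card (fiber S u)) = (\<Sum>u\<in>?U - ?I. alpha W F)"
    using well_covered_card[OF H wcH maximal_bipartite_lex_fiber_nonisolated[OF G S]]
    by (intro sum.cong) auto
  finally show ?thesis by simp
qed

lemma card_projection_maximal_bipartite_lex:
  assumes G: "graph V E" and H: "graph W F" and "W \<noteq> {}"
    and S: "maximal_bipartite_set (V \<times> W) (lex_edge E F) S" and wcG: "well_covered V E"
  shows "card (fst ` S - isolated E (fst ` S)) + 2 * card (isolated E (fst ` S)) = 2 * alpha V E"
proof -
  let ?U = "fst ` S"
  let ?I = "isolated E ?U"
  obtain w where w: "w \<in> W" using \<open>W \<noteq> {}\<close> by blast
  have Sb: "bipartite_set (V \<times> W) (lex_edge E F) S"
    using S unfolding maximal_bipartite_set_def by blast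
  then have "?U \<subseteq> V" using bipartite_set_subset by fastforce
  then have fU: "finite ?U" using graph_finite[OF G] by (rule finite_subset)
  have IU: "?I \<subseteq> ?U" by (rule isolated_subset)
  obtain P Q where PQ: "P \<union> Q = ?U" "P \<inter> Q = {}" "independent V E P" "independent V E Q"
    using bipartite_lex_projection[OF Sb] unfolding bipartite_set_def by blast
  have "card (P \<union> ?I) = alpha V E"
    using maximal_independent_Un_isolated_projection[OF G H w S PQ(1,3,4)]
    by (rule well_covered_card[OF G wcG])
  moreover have "card (Q \<union> ?I) = alpha V E"
    using maximal_independent_Un_isolated_projection[OF G H w S _ PQ(4,3)] PQ(1)
    by (simp add: Un_commute well_covered_card[OF G wcG])
  moreover have "card (P \<union> ?I) + card (Q \<union> ?I) = card ?U + card ?I"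
  proof -
    have "(P \<union> ?I) \<union> (Q \<union> ?I) = ?U" "(P \<union> ?I) \<inter> (Q \<union> ?I) = ?I" using PQ(1,2) IU by blast+
    moreover have "finite (P \<union> ?I)" "finite (Q \<union> ?I)"
      using finite_subset[OF _ fU] PQ(1) IU by blast+
    ultimately show ?thesis using card_Un_Int by metis
  qed
  moreover have "card (?U - ?I) + card ?I = card ?U"
    using card_Diff_subset[OF finite_subset[OF IU fU] IU] card_mono[OF fU IU] by simp
  ultimately show ?thesis by simp
qed

lemma maximal_bipartite_lex_Times:
  assumes G: "graph V E" and H: "graph W F" and "has_edge W F"
    and A: "maximal_independent V E A" and T: "maximal_bipartite_set W F T"
  shows "maximal_bipartite_set (V \<times> W) (lex_edge E F) (A \<times> T)"
proof -
  obtain b c where bc: "b \<in> T" "c \<in> T" "F b c"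
    using maximal_bipartite_set_has_edge[OF H \<open>has_edge W F\<close> T] by blast
  have A_indep: "independent V E A" using A unfolding maximal_independent_def by blast
  obtain X Y where XY: "T \<subseteq> X \<union> Y" "independent W F X" "independent W F Y"
    using T unfolding maximal_bipartite_set_def bipartite_set_iff by blast
  have "A \<times> T \<subseteq> A \<times> X \<union> A \<times> Y" using XY(1) by blast
  moreover have "independent (V \<times> W) (lex_edge E F) (A \<times> X)"
    using A_indep XY(2) by (rule independent_lex_Sigma)
  moreover have "independent (V \<times> W) (lex_edge E F) (A \<times> Y)"
    using A_indep XY(3) by (rule independent_lex_Sigma)
  ultimately have AT: "bipartite_set (V \<times> W) (lex_edge E F) (A \<times> T)"
    unfolding bipartite_set_iff by blast
  have "p \<in> A \<times> T" if R: "bipartite_set (V \<times> W) (lex_edge E F) R" "A \<times> T \<subseteq> R" "p \<in> R" for R p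
  proof (cases p)
    case (Pair z v)
    have "z \<in> A"
    proof (rule ccontr)
      assume "z \<notin> A"
      moreover have "z \<in> V" using bipartite_set_subset[OF R(1)] R(3) Pair by blast
      ultimately obtain a where a: "a \<in> A" "E a z"
        using maximal_independent_dominating[OF G A] by blast
      have "a \<in> fst ` R" "z \<in> fst ` R" using R(2,3) a(1) bc(1) Pair by force+
      then have "a \<notin> isolated E (fst ` R)" using a(2) unfolding isolated_def by blast
      then have "independent W F (fiber R a)"
        using bipartite_lex_fiber_independent[OF R(1) \<open>a \<in> fst ` R\<close>] by blast
      moreover have "b \<in> fiber R a" "c \<in> fiber R a" using R(2) a(1) bc unfolding fiber_def by blast+
      ultimately show False using bc(3) unfolding independent_def by blast
    qed
    moreover have "T \<subseteq> fiber R z" using R(2) \<open>z \<in> A\<close> unfolding fiber_def by blast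
    then have "fiber R z = T"
      using T bipartite_lex_fiber[OF R(1), of z] unfolding maximal_bipartite_set_def by blast
    ultimately show ?thesis using R(3) Pair unfolding fiber_def by blast
  qed
  then show ?thesis using AT unfolding maximal_bipartite_set_def by blast
qed

lemma maximal_bipartite_lex_refiber:
  assumes G: "graph V E" and H: "graph W F"
    and S: "maximal_bipartite_set (V \<times> W) (lex_edge E F) S"
    and x: "x \<in> fst ` S" "x \<notin> isolated E (fst ` S)" and J: "maximal_independent W F J"
  shows "maximal_bipartite_set (V \<times> W) (lex_edge E F) (refiber S x J)"
proof -
  have Sb: "bipartite_set (V \<times> W) (lex_edge E F) S"
    using S unfolding maximal_bipartite_set_def by blast
  have J_indep: "independent W F J" using J unfolding maximal_independent_def by blast
  have "W \<noteq> {}" using fiber_nonempty[OF x(1)] fiber_subset[OF bipartite_set_subset[OF Sb]] by blast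
  then have "J \<noteq> {}" using maximal_independent_nonempty[OF H _ J] by blast
  then have fst_eq: "fst ` refiber S x J = fst ` S" by (rule fst_refiber[OF x(1)])
  have SJ: "bipartite_set (V \<times> W) (lex_edge E F) (refiber S x J)"
    using bipartite_lex_refiber[OF G Sb x(1) \<open>J \<noteq> {}\<close> bipartite_set_if_independent[OF J_indep]]
      J_indep by blast
  obtain z where z: "z \<in> fst ` S" "E x z" using x unfolding isolated_def by blast
  have "T = refiber S x J" if T: "bipartite_set (V \<times> W) (lex_edge E F) T" "refiber S x J \<subseteq> T" for T
  proof -
    have xz: "x \<in> fst ` T" "z \<in> fst ` T" using T(2) x(1) z(1) fst_eq by blast+
    then have "x \<notin> isolated E (fst ` T)" using z(2) unfolding isolated_def by blast
    then have "independent W F (fiber T x)" using bipartite_lex_fiber_independent[OF T(1) xz(1)] by blast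
    moreover have "J \<subseteq> fiber T x" using fiber_mono[OF T(2), of x] by simp
    ultimately have fiber_T: "fiber T x = J" using J unfolding maximal_independent_def by blast
    have "bipartite_set (V \<times> W) (lex_edge E F) (refiber T x (fiber S x))"
      using bipartite_lex_refiber[OF G T(1) xz(1) fiber_nonempty[OF x(1)] bipartite_lex_fiber[OF Sb]]
        bipartite_lex_fiber_independent[OF Sb x] by blast
    moreover have "S \<subseteq> refiber T x (fiber S x)"
      using T(2) unfolding refiber_def fiber_def by auto
    ultimately have "refiber T x (fiber S x) = S" using S unfolding maximal_bipartite_set_def by blast
    then have "refiber S x J = refiber T x J" by (metis refiber_refiber)
    then show ?thesis using refiber_fiber[of T x] by (simp add: fiber_T)
  qed
  then show ?thesis using SJ unfolding maximal_bipartite_set_def by blast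
qed

lemma ex_maximal_bipartite_lex_nonisolated:
  assumes G: "graph V E" and H: "graph W F" and xy: "x \<in> V" "y \<in> V" "E x y" and w: "w \<in> W"
  obtains S where "maximal_bipartite_set (V \<times> W) (lex_edge E F) S"
    "x \<in> fst ` S" "x \<notin> isolated E (fst ` S)"
proof -
  have "independent (V \<times> W) (lex_edge E F) ({v} \<times> {w})" if "v \<in> V" for v
    using independent_lex_Sigma[OF independent_singleton[OF G that] independent_singleton[OF H w]] .
  then have "bipartite_set (V \<times> W) (lex_edge E F) {(x, w), (y, w)}"
    unfolding bipartite_set_iff using xy(1,2) by (intro exI[of _ "{x} \<times> {w}"] exI[of _ "{y} \<times> {w}"]) auto
  moreover have "finite (V \<times> W)" using graph_finite[OF G] graph_finite[OF H] by simp
  ultimately obtain S where S: "{(x, w), (y, w)} \<subseteq> S" "maximal_bipartite_set (V \<times> W) (lex_edge E F) S"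
    using ex_maximal_bipartite_set_superset by blast
  then have "x \<in> fst ` S" "y \<in> fst ` S" by force+
  then have "x \<notin> isolated E (fst ` S)" using xy(3) unfolding isolated_def by blast
  then show thesis using that S(2) \<open>x \<in> fst ` S\<close> by blast
qed

lemma well_bicovered_lex_imp_well_covered_left:
  assumes G: "graph V E" and H: "graph W F" and "has_edge W F"
    and wbc: "well_bicovered (V \<times> W) (lex_edge E F)"
  shows "well_covered V E"
proof -
  obtain T where T: "maximal_bipartite_set W F T"
    using ex_maximal_bipartite_set_superset[OF graph_finite[OF H], of F "{}"]
    by (auto simp: bipartite_set_if_independent)
  have "T \<noteq> {}" using maximal_bipartite_set_has_edge[OF H \<open>has_edge W F\<close> T] by blast
  moreover have "finite T"
    using T bipartite_set_subset graph_finite[OF H] finite_subset unfolding maximal_bipartite_set_def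
    by metis
  ultimately have "card T \<noteq> 0" by simp
  have "card A1 = card A2" if "maximal_independent V E A1" "maximal_independent V E A2" for A1 A2
  proof -
    have "card (A1 \<times> T) = card (A2 \<times> T)"
      using wbc maximal_bipartite_lex_Times[OF G H \<open>has_edge W F\<close> _ T] that
      unfolding well_bicovered_def by blast
    then show ?thesis using \<open>card T \<noteq> 0\<close> by (simp add: card_cartesian_product)
  qed
  then show ?thesis unfolding well_covered_def by blast
qed

lemma well_bicovered_lex_imp_well_bicovered_right:
  assumes G: "graph V E" and "V \<noteq> {}" and H: "graph W F" and "has_edge W F"
    and wbc: "well_bicovered (V \<times> W) (lex_edge E F)"
  shows "well_bicovered W F"
proof -
  obtain A where A: "maximal_independent V E A"
    using ex_maximal_independent[OF graph_finite[OF G]] by blast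
  have "A \<noteq> {}" using maximal_independent_nonempty[OF G \<open>V \<noteq> {}\<close> A] .
  moreover have "finite A" using A finite_independent[OF G] unfolding maximal_independent_def by blast
  ultimately have "card A \<noteq> 0" by simp
  have "card T1 = card T2" if "maximal_bipartite_set W F T1" "maximal_bipartite_set W F T2" for T1 T2
  proof -
    have "card (A \<times> T1) = card (A \<times> T2)"
      using wbc maximal_bipartite_lex_Times[OF G H \<open>has_edge W F\<close> A] that
      unfolding well_bicovered_def by blast
    then show ?thesis using \<open>card A \<noteq> 0\<close> by (simp add: card_cartesian_product)
  qed
  then show ?thesis unfolding well_bicovered_def by blast
qed

lemma well_bicovered_lex_imp_well_covered_right:
  assumes G: "graph V E" and "has_edge V E" and H: "graph W F" and "W \<noteq> {}"
    and wbc: "well_bicovered (V \<times> W) (lex_edge E F)"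
  shows "well_covered W F"
proof -
  obtain x y where xy: "x \<in> V" "y \<in> V" "E x y" using \<open>has_edge V E\<close> by (rule has_edgeE)
  obtain w where w: "w \<in> W" using \<open>W \<noteq> {}\<close> by blast
  obtain S where S: "maximal_bipartite_set (V \<times> W) (lex_edge E F) S"
    and x: "x \<in> fst ` S" "x \<notin> isolated E (fst ` S)"
    using ex_maximal_bipartite_lex_nonisolated[OF G H xy w] .
  have SV: "S \<subseteq> V \<times> W" using S bipartite_set_subset unfolding maximal_bipartite_set_def by blast
  then have "finite S" using graph_finite[OF G] graph_finite[OF H] finite_subset by blast
  have "finite (fiber S x)" using fiber_subset[OF SV] graph_finite[OF H] by (rule finite_subset)
  have "card J = card (fiber S x)" if J: "maximal_independent W F J" for J
  proof -
    have "card (refiber S x J) = card (refiber S x (fiber S x))"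
      using wbc maximal_bipartite_lex_refiber[OF G H S x J] S
      unfolding well_bicovered_def refiber_fiber by blast
    moreover have "finite J" using J finite_independent[OF H] unfolding maximal_independent_def by blast
    ultimately show ?thesis
      using card_refiber[OF \<open>finite S\<close> \<open>finite J\<close>, of x]
        card_refiber[OF \<open>finite S\<close> \<open>finite (fiber S x)\<close>, of x] by simp
  qed
  then show ?thesis unfolding well_covered_def by metis
qed

lemma well_bicovered_lex_imp_bip_number_eq:
  assumes G: "graph V E" and "has_edge V E" and H: "graph W F" and "has_edge W F"
    and wbc: "well_bicovered (V \<times> W) (lex_edge E F)"
    and wcG: "well_covered V E" and wcH: "well_covered W F" and wbcH: "well_bicovered W F"
  shows "bip_number W F = 2 * alpha W F"
proof -
  obtain x y where xy: "x \<in> V" "y \<in> V" "E x y" using \<open>has_edge V E\<close> by (rule has_edgeE)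
  obtain w where w: "w \<in> W" using \<open>has_edge W F\<close> by (rule has_edgeE)
  obtain S where S: "maximal_bipartite_set (V \<times> W) (lex_edge E F) S"
    and x: "x \<in> fst ` S" "x \<notin> isolated E (fst ` S)"
    using ex_maximal_bipartite_lex_nonisolated[OF G H xy w] .
  obtain A where A: "maximal_independent V E A"
    using ex_maximal_independent[OF graph_finite[OF G]] by blast
  obtain T where T: "maximal_bipartite_set W F T"
    using ex_maximal_bipartite_set_superset[OF graph_finite[OF H], of F "{}"]
    by (auto simp: bipartite_set_if_independent)
  define i where "i = card (isolated E (fst ` S))"
  define n where "n = card (fst ` S - isolated E (fst ` S))"
  have "card S = card (A \<times> T)"
    using wbc S maximal_bipartite_lex_Times[OF G H \<open>has_edge W F\<close> A T]
    unfolding well_bicovered_def by blast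
  then have S_card: "card S = alpha V E * bip_number W F"
    by (simp add: card_cartesian_product well_covered_card[OF G wcG A] well_bicovered_card[OF H wbcH T])
  have "n \<noteq> 0"
  proof -
    have "fst ` S \<subseteq> V" using S bipartite_set_subset unfolding maximal_bipartite_set_def by fastforce
    then have "finite (fst ` S - isolated E (fst ` S))" using graph_finite[OF G] finite_subset by blast
    then show ?thesis using x unfolding n_def by auto
  qed
  \<comment> \<open>Both sides are 2|S|, computed via |S| = |A \<times> T| and via the fibres of S respectively.\<close>
  have "n * bip_number W F + 2 * i * bip_number W F = 2 * alpha V E * bip_number W F"
    using card_projection_maximal_bipartite_lex[OF G H _ S wcG] w
    unfolding i_def n_def by (metis add_mult_distrib empty_iff)
  also have "\<dots> = 2 * i * bip_number W F + 2 * n * alpha W F"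
    using S_card card_maximal_bipartite_lex[OF G H S wcH wbcH] unfolding i_def n_def by simp
  finally show ?thesis using \<open>n \<noteq> 0\<close> by simp
qed

lemma well_bicovered_lexI:
  assumes G: "graph V E" and H: "graph W F" and "W \<noteq> {}"
    and wcG: "well_covered V E" and wcH: "well_covered W F" and wbcH: "well_bicovered W F"
    and b: "bip_number W F = 2 * alpha W F"
  shows "well_bicovered (V \<times> W) (lex_edge E F)"
proof -
  have "card S = 2 * alpha V E * alpha W F"
    if S: "maximal_bipartite_set (V \<times> W) (lex_edge E F) S" for S
  proof -
    have "card S = (card (fst ` S - isolated E (fst ` S)) + 2 * card (isolated E (fst ` S))) * alpha W F"
      using card_maximal_bipartite_lex[OF G H S wcH wbcH] b by (simp add: algebra_simps)
    also have "\<dots> = 2 * alpha V E * alpha W F"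
      using card_projection_maximal_bipartite_lex[OF G H \<open>W \<noteq> {}\<close> S wcG] by simp
    finally show ?thesis .
  qed
  then show ?thesis unfolding well_bicovered_def by simp
qed

theorem mainTheorem4:
  fixes V :: "'a set" and E :: "'a \<Rightarrow> 'a \<Rightarrow> bool"
    and W :: "'b set" and F :: "'b \<Rightarrow> 'b \<Rightarrow> bool"
  assumes "graph V E" and "graph W F"
    and "has_edge V E" and "has_edge W F"
  shows "well_bicovered (lex_vertices V W) (lex_edge E F) \<longleftrightarrow>
    (well_covered V E \<and>
     (well_covered W F \<and> well_bicovered W F \<and> bip_number W F = 2 * alpha W F))"
proof -
  have "V \<noteq> {}" "W \<noteq> {}" using assms(3,4) by (auto elim: has_edgeE)
  show ?thesis unfolding lex_vertices_def
  proof
    assume wbc: "well_bicovered (V \<times> W) (lex_edge E F)"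
    have wcG: "well_covered V E"
      using assms(1,2,4) wbc by (rule well_bicovered_lex_imp_well_covered_left)
    have wcH: "well_covered W F"
      using assms(1,3,2) \<open>W \<noteq> {}\<close> wbc by (rule well_bicovered_lex_imp_well_covered_right)
    have wbcH: "well_bicovered W F"
      using assms(1) \<open>V \<noteq> {}\<close> assms(2,4) wbc by (rule well_bicovered_lex_imp_well_bicovered_right)
    have "bip_number W F = 2 * alpha W F"
      using assms(1,3,2,4) wbc wcG wcH wbcH by (rule well_bicovered_lex_imp_bip_number_eq)
    with wcG wcH wbcH show "well_covered V E \<and> well_covered W F \<and> well_bicovered W F
      \<and> bip_number W F = 2 * alpha W F" by blast
  next
    assume "well_covered V E \<and> well_covered W F \<and> well_bicovered W F
      \<and> bip_number W F = 2 * alpha W F"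
    then show "well_bicovered (V \<times> W) (lex_edge E F)"
      using well_bicovered_lexI[OF assms(1,2) \<open>W \<noteq> {}\<close>] by blast
  qed
qed

end
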